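(* Let $\tau$ be a trace on $\widehat{TL}_3(q)$, let $X=g_{\sigma_2}g_{\sigma_1}g_{a_3}$, $u=g_{\sigma_2}g_{a_3}g_{\sigma_2}^{-1}$, and let $r\le s$ be positive integers. Then there exist an integer $0\le h\le s$, elements $c_0,\dots,c_h\in B$ and finitely many Markov elements $M_i$ such that $$\tau\Big((g_{\sigma_1}u)^{r}g_{\sigma_1}g_{\sigma_2}(g_{\sigma_1}u)^{s}g_{\sigma_1}g_{\sigma_2}\Big)=\tau\Big(\sum_{j=0}^{h}c_jX^{j}+\sum_iM_i\Big).$$
   Context: $K$ is an integral domain of characteristic $0$, $q\in K$ invertible and a square, $q+1$ invertible. $\widehat{TL}_3(q)$ is the unital $K$-algebra generated by $g_{\sigma_1},g_{\sigma_2},g_{a_3}$ with relations $g_{\sigma_1}g_{\sigma_2}g_{\sigma_1}=g_{\sigma_2}g_{\sigma_1}g_{\sigma_2}$, $g_{\sigma_i}g_{a_3}g_{\sigma_i}=g_{a_3}g_{\sigma_i}g_{a_3}$ ($i=1,2$), $x^2=(q-1)x+q$ for each generator $x$, and $V(g_{\sigma_1},g_{\sigma_2})=V(g_{\sigma_1},g_{a_3})=V(g_{\sigma_2},g_{a_3})=0$ where $V(x,y)=xyx+xy+yx+x+y+1$. $B$ is the unital subalgebra generated by $g_{\sigma_1}$ and $u$. A Markov element is an element $A\,g_{\sigma_2}^{\epsilon}A'$ with $A,A'\in B$, $\epsilon\in\{0,1\}$. A trace is a $K$-linear map $\tau:\widehat{TL}_3(q)\to K$ with $\tau(xy)=\tau(yx)$.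 *)

theory Defs
  imports Main
begin

text \<open>A unital K-algebra A is modelled as a ring A together with a ring homomorphism
  alg :: K => A whose image is central.\<close>

definition is_K_algebra :: "('k::comm_ring_1 \<Rightarrow> 'a::ring_1) \<Rightarrow> bool" where
  "is_K_algebra alg \<longleftrightarrow> alg 0 = 0 \<and> alg 1 = 1 \<and>
     (\<forall>x y. alg (x + y) = alg x + alg y) \<and> (\<forall>x y. alg (x * y) = alg x * alg y) \<and>
     (\<forall>k b. alg k * b = b * alg k)"

definition Vrel :: "'a::ring_1 \<Rightarrow> 'a \<Rightarrow> 'a" where
  "Vrel x y = x*y*x + x*y + y*x + x + y + 1"

text \<open>Relations of the affine Temperley-Lieb algebra \<open>TL_3^(q)\<close> on the generators
  g1 = g_sigma1, g2 = g_sigma2, g3 = g_a3.\<close>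
definition TL3_rels :: "('k::comm_ring_1 \<Rightarrow> 'a::ring_1) \<Rightarrow> 'k \<Rightarrow> 'a \<Rightarrow> 'a \<Rightarrow> 'a \<Rightarrow> bool" where
  "TL3_rels alg q g1 g2 g3 \<longleftrightarrow>
     g1*g2*g1 = g2*g1*g2 \<and> g1*g3*g1 = g3*g1*g3 \<and> g2*g3*g2 = g3*g2*g3 \<and>
     (\<forall>x\<in>{g1,g2,g3}. x*x = alg (q - 1) * x + alg q) \<and>
     Vrel g1 g2 = 0 \<and> Vrel g1 g3 = 0 \<and> Vrel g2 g3 = 0"

inductive_set subalg2 :: "('k \<Rightarrow> 'a::ring_1) \<Rightarrow> 'a \<Rightarrow> 'a \<Rightarrow> 'a set"
  for alg :: "'k \<Rightarrow> 'a" and x :: 'a and y :: 'a where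
  scal: "alg k \<in> subalg2 alg x y"
| gen1: "x \<in> subalg2 alg x y"
| gen2: "y \<in> subalg2 alg x y"
| add: "a \<in> subalg2 alg x y \<Longrightarrow> b \<in> subalg2 alg x y \<Longrightarrow> a + b \<in> subalg2 alg x y"
| mult: "a \<in> subalg2 alg x y \<Longrightarrow> b \<in> subalg2 alg x y \<Longrightarrow> a * b \<in> subalg2 alg x y"

definition is_markov :: "'a set \<Rightarrow> 'a::ring_1 \<Rightarrow> 'a \<Rightarrow> bool" where
  "is_markov B g2 m \<longleftrightarrow> (\<exists>A\<in>B. \<exists>A'\<in>B. \<exists>eps::nat. eps \<le> 1 \<and> m = A * g2 ^ eps * A')"

definition is_trace :: "('k::comm_ring_1 \<Rightarrow> 'a::ring_1) \<Rightarrow> ('a \<Rightarrow> 'k) \<Rightarrow> bool" where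
  "is_trace alg \<tau> \<longleftrightarrow> (\<forall>x y. \<tau> (x + y) = \<tau> x + \<tau> y) \<and> (\<forall>k x. \<tau> (alg k * x) = k * \<tau> x) \<and>
     (\<forall>x y. \<tau> (x * y) = \<tau> (y * x))"

end

theory Submission
  imports Defs
begin

text \<open>Put \<open>e\<^sub>i = g\<^sub>i + 1\<close>. The quadratic and V relations become
  \<open>e\<^sub>i\<^sup>2 = (q + 1) e\<^sub>i\<close> and \<open>e\<^sub>i e\<^sub>j e\<^sub>i = q e\<^sub>i\<close>, and since
  \<open>g\<^sub>2 e\<^sub>2 = q e\<^sub>2\<close>, the conjugate \<open>Q = g\<^sub>2 e\<^sub>3 g\<^sub>2\<^sup>-\<^sup>1 = u + 1\<close> satisfies the
  same relations with \<open>e\<^sub>2\<close>. Writing \<open>g\<^sub>2 = e\<^sub>2 - 1\<close>, the trace of \<open>A g\<^sub>2 A' g\<^sub>2\<close> with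
  \<open>A, A' \<in> B\<close> is, up to Markov terms, that of \<open>e\<^sub>2 A' e\<^sub>2 A\<close>, and \<open>A'\<close> is a linear
  combination of words in \<open>e\<^sub>1\<close> and \<open>Q\<close>. For a word \<open>w\<close>, \<open>e\<^sub>2 w e\<^sub>2 A\<close> is reduced by
  induction on the length of \<open>w\<close>: repeated letters collapse, a single letter is absorbed
  into \<open>e\<^sub>2\<close>, and for an alternating word one rotates the last letter of \<open>A\<close> to the front
  and uses one of the cubic relations among \<open>e\<^sub>1, e\<^sub>2, Q\<close>, which shortens \<open>w\<close>.\<close>

locale K_algebra =
  fixes alg :: "'k::comm_ring_1 \<Rightarrow> 'a::ring_1"
  assumes is_K_algebra: "is_K_algebra alg"
begin

lemma alg_0 [simp]: "alg 0 = 0" and alg_1 [simp]: "alg 1 = 1"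
  and alg_add: "alg (x + y) = alg x + alg y" and alg_mult: "alg (x * y) = alg x * alg y"
  and alg_central: "alg k * b = b * alg k"
  using is_K_algebra unfolding is_K_algebra_def by blast+

lemma alg_minus: "alg (- x) = - alg x"
  by (metis add.right_inverse alg_0 alg_add add.inverse_unique)

lemma alg_diff: "alg (x - y) = alg x - alg y"
  using alg_add[of x "- y"] by (simp add: alg_minus)

lemma mult_alg_left: "x * (alg k * y) = alg k * (x * y)"
  by (metis alg_central mult.assoc)

lemma alg_mult_alg: "alg a * (alg b * y) = alg (a * b) * y"
  by (simp add: alg_mult mult.assoc)

lemma Vrel_swap:
  assumes "x * y * x = y * x * y"
  shows "Vrel y x = Vrel x y"
  using assms unfolding Vrel_def by (simp add: algebra_simps)

lemma hecke_plus_one_square: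
  assumes "x * x = alg (q - 1) * x + alg q"
  shows "(x + 1) * (x + 1) = alg (q + 1) * (x + 1)"
  using assms by (simp add: alg_add alg_diff algebra_simps)

lemma hecke_plus_one_TL:
  assumes "x * x = alg (q - 1) * x + alg q" and "Vrel x y = 0"
  shows "(x + 1) * (y + 1) * (x + 1) = alg q * (x + 1)"
proof -
  have "(x + 1) * (y + 1) * (x + 1) = Vrel x y + (x * x - alg (q - 1) * x - alg q) + alg q * (x + 1)"
    unfolding Vrel_def by (simp add: alg_diff algebra_simps)
  with assms show ?thesis by simp
qed

end

lemma mult_context2: "a * b = c \<Longrightarrow> a * (b * x) = c * (x::'a::semigroup_mult)"
  by (simp add: mult.assoc[symmetric])

lemma mult_context3: "a * b * c = d \<Longrightarrow> a * (b * (c * x)) = d * (x::'a::semigroup_mult)"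
  by (simp add: mult.assoc[symmetric])

locale TL3_trace = K_algebra alg
  for alg :: "'k::comm_ring_1 \<Rightarrow> 'a::ring_1" +
  fixes q qi :: 'k and g1 g2 g3 g2inv :: 'a and \<tau> :: "'a \<Rightarrow> 'k"
  assumes q_qi: "q * qi = 1"
    and rels: "TL3_rels alg q g1 g2 g3"
    and g2_g2inv: "g2 * g2inv = 1" and g2inv_g2: "g2inv * g2 = 1"
    and trace: "is_trace alg \<tau>"
begin

lemma trace_add: "\<tau> (x + y) = \<tau> x + \<tau> y" and trace_scale: "\<tau> (alg k * x) = k * \<tau> x"
  and trace_commute: "\<tau> (x * y) = \<tau> (y * x)"
  using trace unfolding is_trace_def by blast+

definition "e1 = g1 + 1"
definition "e2 = g2 + 1"
definition "e3 = g3 + 1"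

lemma braid: "g1 * g2 * g1 = g2 * g1 * g2" "g1 * g3 * g1 = g3 * g1 * g3" "g2 * g3 * g2 = g3 * g2 * g3"
  and quadratic: "g1 * g1 = alg (q - 1) * g1 + alg q" "g2 * g2 = alg (q - 1) * g2 + alg q"
    "g3 * g3 = alg (q - 1) * g3 + alg q"
  and Vrel_zero: "Vrel g1 g2 = 0" "Vrel g1 g3 = 0" "Vrel g2 g3 = 0"
  using rels unfolding TL3_rels_def by auto

lemma e_square: "e1 * e1 = alg (q + 1) * e1" "e2 * e2 = alg (q + 1) * e2" "e3 * e3 = alg (q + 1) * e3"
  unfolding e1_def e2_def e3_def by (simp_all add: hecke_plus_one_square quadratic)

lemma e_TL: "e1 * e2 * e1 = alg q * e1" "e2 * e1 * e2 = alg q * e2"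
  "e1 * e3 * e1 = alg q * e1" "e3 * e1 * e3 = alg q * e3"
  "e2 * e3 * e2 = alg q * e2" "e3 * e2 * e3 = alg q * e3"
  unfolding e1_def e2_def e3_def
  using hecke_plus_one_TL quadratic Vrel_zero Vrel_swap[OF braid(1)] Vrel_swap[OF braid(2)]
    Vrel_swap[OF braid(3)] by metis+

lemma g2_e2: "g2 * e2 = alg q * e2" "e2 * g2 = alg q * e2"
  unfolding e2_def using quadratic(2) by (simp_all add: alg_diff algebra_simps)

lemma g2inv_eq: "g2inv = alg qi * e2 - 1"
proof -
  have "g2 * (alg qi * e2 - 1) = alg (qi * q) * e2 - g2"
    by (simp add: right_diff_distrib mult_alg_left[of g2] g2_e2 alg_mult_alg)
  also have "\<dots> = 1"
    using q_qi by (simp add: mult.commute e2_def)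
  finally have "g2 * (alg qi * e2 - 1) = 1" .
  then have "g2inv * (g2 * (alg qi * e2 - 1)) = g2inv" by simp
  then show ?thesis using g2inv_g2 by (simp add: mult.assoc[symmetric])
qed

lemma g2inv_e2: "g2inv * e2 = alg qi * e2" "e2 * g2inv = alg qi * e2"
proof -
  have "qi * (q + 1) - 1 = qi"
    using q_qi by (simp add: algebra_simps)
  then have "alg qi * (e2 * e2) - e2 = alg qi * e2"
    by (simp only: e_square(2) alg_mult_alg) (metis alg_1 alg_diff left_diff_distrib mult_1)
  then show "g2inv * e2 = alg qi * e2" "e2 * g2inv = alg qi * e2"
    by (simp_all add: g2inv_eq left_diff_distrib right_diff_distrib mult.assoc mult_alg_left[of e2])
qed

lemma q_qi_cancel: "qi * q = 1" "qi * (q * k) = k" "q * (qi * k) = k"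
  by (simp_all add: mult.assoc[symmetric] q_qi) (simp_all add: mult.commute q_qi)

text \<open>The relations in right-nested form, so that simp can apply them inside products
  normalised by \<open>mult.assoc\<close>; \<open>mult_alg_left\<close> is only instantiated at generators
  because the general rule loops on \<open>alg a * (alg b * y)\<close>.\<close>
lemmas TL_rewrites =
  g2_g2inv g2inv_g2 g2_e2 g2inv_e2 e_square e_TL[simplified mult.assoc]
  mult_context2[OF g2_g2inv] mult_context2[OF g2inv_g2] mult_context2[OF g2_e2(1)]
  mult_context2[OF g2_e2(2)] mult_context2[OF g2inv_e2(1)] mult_context2[OF g2inv_e2(2)]
  mult_context2[OF e_square(1)] mult_context2[OF e_square(2)] mult_context2[OF e_square(3)]
  mult_context3[OF e_TL(1)] mult_context3[OF e_TL(2)] mult_context3[OF e_TL(3)]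
  mult_context3[OF e_TL(4)] mult_context3[OF e_TL(5)] mult_context3[OF e_TL(6)]
  mult_alg_left[of g2] mult_alg_left[of g2inv] mult_alg_left[of e1] mult_alg_left[of e2]
  mult_alg_left[of e3] alg_mult_alg q_qi q_qi_cancel

definition "Q = g2 * e3 * g2inv"

lemma Q_square: "Q * Q = alg (q + 1) * Q"
  unfolding Q_def by (simp add: mult.assoc TL_rewrites)

lemma e2_Q_e2: "e2 * Q * e2 = alg q * e2"
  unfolding Q_def by (simp add: mult.assoc TL_rewrites)

lemma Q_e2_Q: "Q * e2 * Q = alg q * Q"
  unfolding Q_def by (simp add: mult.assoc TL_rewrites mult_alg_left[of Q])

lemma g2_mult: "g2 * y = e2 * y - y"
  unfolding e2_def by (simp add: algebra_simps)

lemma g2inv_mult: "g2inv * y = alg qi * (e2 * y) - y"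
  unfolding g2inv_eq by (simp add: algebra_simps)

lemma e1_e2_Q_e1: "e1 * e2 * Q * e1 = alg q * (e1 * Q * e1) - alg q * (e1 * Q * e2 * e1)"
  unfolding Q_def
  by (simp add: mult.assoc TL_rewrites)
     (simp add: g2_mult g2inv_mult ring_distribs mult.assoc TL_rewrites)

lemma Q_e2_e1_Q: "Q * e2 * e1 * Q = Q * e1 * Q - alg qi * (Q * e1 * e2 * Q)"
  unfolding Q_def
  by (simp add: mult.assoc TL_rewrites)
     (simp add: g2_mult g2inv_mult ring_distribs mult.assoc TL_rewrites)

abbreviation "u \<equiv> g2 * g3 * g2inv"
abbreviation "B \<equiv> subalg2 alg g1 u"

lemma Q_eq: "Q = u + 1"
  unfolding Q_def e3_def by (simp add: algebra_simps g2_g2inv)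

lemma one_in_B: "1 \<in> B"
  using subalg2.scal[of alg 1 g1 u] by simp

lemma e1_in_B: "e1 \<in> B"
  unfolding e1_def by (intro subalg2.add subalg2.gen1 one_in_B)

lemma Q_in_B: "Q \<in> B"
  unfolding Q_eq by (intro subalg2.add subalg2.gen2 one_in_B)

lemma power_in_B: "a \<in> B \<Longrightarrow> a ^ n \<in> B"
  by (induction n) (auto intro: one_in_B subalg2.mult)

definition markov_reducible :: "'a \<Rightarrow> bool" where
  "markov_reducible x \<longleftrightarrow> (\<exists>Ms. (\<forall>m\<in>set Ms. is_markov B g2 m) \<and> \<tau> x = \<tau> (sum_list Ms))"

lemma markov_reducible_trace_eq: "\<tau> x = \<tau> y \<Longrightarrow> markov_reducible y \<Longrightarrow> markov_reducible x"
  unfolding markov_reducible_def by auto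

lemma markov_reducible_markov: "is_markov B g2 m \<Longrightarrow> markov_reducible m"
  unfolding markov_reducible_def by (intro exI[of _ "[m]"]) simp

lemma markov_reducible_add:
  assumes "markov_reducible x" and "markov_reducible y"
  shows "markov_reducible (x + y)"
proof -
  obtain Ms Ns where "\<forall>m\<in>set Ms. is_markov B g2 m" "\<tau> x = \<tau> (sum_list Ms)"
    and "\<forall>m\<in>set Ns. is_markov B g2 m" "\<tau> y = \<tau> (sum_list Ns)"
    using assms unfolding markov_reducible_def by blast
  then show ?thesis
    unfolding markov_reducible_def by (intro exI[of _ "Ms @ Ns"]) (auto simp: trace_add)
qed

lemma is_markov_scale:
  assumes "is_markov B g2 m"
  shows "is_markov B g2 (alg k * m)"
proof -
  obtain A A' eps where "A \<in> B" "A' \<in> B" "eps \<le> (1::nat)" "m = A * g2 ^ eps * A'"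
    using assms unfolding is_markov_def by blast
  moreover have "alg k * (A * g2 ^ eps * A') = (alg k * A) * g2 ^ eps * A'"
    by (simp add: mult.assoc)
  ultimately show ?thesis
    unfolding is_markov_def by (metis subalg2.mult subalg2.scal)
qed

lemma markov_reducible_scale:
  assumes "markov_reducible x"
  shows "markov_reducible (alg k * x)"
proof -
  obtain Ms where "\<forall>m\<in>set Ms. is_markov B g2 m" "\<tau> x = \<tau> (sum_list Ms)"
    using assms unfolding markov_reducible_def by blast
  then show ?thesis
    unfolding markov_reducible_def
    by (intro exI[of _ "map (\<lambda>m. alg k * m) Ms"])
       (auto simp: trace_scale is_markov_scale sum_list_const_mult)
qed

lemma markov_reducible_diff:
  "markov_reducible x \<Longrightarrow> markov_reducible y \<Longrightarrow> markov_reducible (x - y)"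
  using markov_reducible_add[OF _ markov_reducible_scale[of y "- 1"]] by (simp add: alg_minus)

lemma markov_reducible_B_B: "a \<in> B \<Longrightarrow> b \<in> B \<Longrightarrow> markov_reducible (a * b)"
  using markov_reducible_markov[of "a * b"] unfolding is_markov_def
  by (metis power_0 mult_1_right le0)

lemma markov_reducible_B_g2_B: "a \<in> B \<Longrightarrow> b \<in> B \<Longrightarrow> markov_reducible (a * g2 * b)"
  using markov_reducible_markov[of "a * g2 * b"] unfolding is_markov_def
  by (metis power_one_right order_refl)

lemma markov_reducible_B_e2_B:
  assumes "a \<in> B" and "b \<in> B"
  shows "markov_reducible (a * e2 * b)"
proof -
  have "a * e2 * b = a * g2 * b + a * b"
    unfolding e2_def by (simp add: algebra_simps)
  then show ?thesis
    using assms by (simp add: markov_reducible_add markov_reducible_B_g2_B markov_reducible_B_B)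
qed

definition letter :: "bool \<Rightarrow> 'a" where
  "letter z = (if z then e1 else Q)"

definition word :: "bool list \<Rightarrow> 'a" where
  "word w = (\<Prod>z\<leftarrow>w. letter z)"

lemma word_Nil [simp]: "word [] = 1" and word_Cons [simp]: "word (z # w) = letter z * word w"
  and word_append: "word (v @ w) = word v * word w"
  unfolding word_def by simp_all

lemma letter_in_B: "letter z \<in> B"
  unfolding letter_def using e1_in_B Q_in_B by simp

lemma word_in_B: "word w \<in> B"
  by (induction w) (simp_all add: one_in_B subalg2.mult letter_in_B)

lemma letter_square: "letter z * letter z = alg (q + 1) * letter z"
  unfolding letter_def using e_square(1) Q_square by simp

lemma e2_letter_e2: "e2 * letter z * e2 = alg q * e2"
  unfolding letter_def using e_TL(2) e2_Q_e2 by simp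

lemma letter_e2_letter: "letter z * e2 * letter z = alg q * letter z"
  unfolding letter_def using e_TL(1) Q_e2_Q by simp

lemma letter_e2_letter_letter:
  assumes "z \<noteq> z'"
  obtains c1 c2 where "letter z' * e2 * letter z * letter z' =
    alg c1 * (letter z' * letter z * letter z') + alg c2 * (letter z' * letter z * e2 * letter z')"
proof (cases z')
  case True
  with assms e1_e2_Q_e1 show ?thesis
    by (intro that[of q "- q"]) (simp add: letter_def alg_minus)
next
  case False
  with assms Q_e2_e1_Q show ?thesis
    by (intro that[of 1 "- qi"]) (simp add: letter_def alg_minus)
qed

lemma markov_reducible_commute: "markov_reducible (y * x) \<Longrightarrow> markov_reducible (x * y)"
  by (metis markov_reducible_trace_eq trace_commute)

lemma markov_reducible_alternating_rotated:
  assumes "z \<noteq> z'" and IH: "\<And>x. markov_reducible (e2 * word (z' # w) * e2 * word x)"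
  shows "markov_reducible (letter z' * (e2 * word (z # z' # w) * e2 * word xs))"
proof -
  obtain c1 c2 where c: "letter z' * e2 * letter z * letter z' =
      alg c1 * (letter z' * letter z * letter z') + alg c2 * (letter z' * letter z * e2 * letter z')"
    using letter_e2_letter_letter[OF assms(1)] by blast
  have "letter z' * (e2 * word (z # z' # w) * e2 * word xs)
      = (letter z' * e2 * letter z * letter z') * (word w * e2 * word xs)"
    by (simp add: mult.assoc)
  also have "\<dots> = alg c1 * ((letter z' * letter z * letter z' * word w) * e2 * word xs)
      + alg c2 * ((letter z' * letter z) * (e2 * word (z' # w) * e2 * word xs))"
    unfolding c by (simp add: ring_distribs mult.assoc)
  finally have split: "letter z' * (e2 * word (z # z' # w) * e2 * word xs)
      = alg c1 * ((letter z' * letter z * letter z' * word w) * e2 * word xs)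
      + alg c2 * ((letter z' * letter z) * (e2 * word (z' # w) * e2 * word xs))" .
  have "markov_reducible ((letter z' * letter z * letter z' * word w) * e2 * word xs)"
    by (intro markov_reducible_B_e2_B subalg2.mult letter_in_B word_in_B)
  moreover have "markov_reducible ((letter z' * letter z) * (e2 * word (z' # w) * e2 * word xs))"
  proof (rule markov_reducible_commute)
    show "markov_reducible ((e2 * word (z' # w) * e2 * word xs) * (letter z' * letter z))"
      using IH[of "xs @ [z', z]"] by (simp add: word_append mult.assoc)
  qed
  ultimately show ?thesis
    unfolding split by (intro markov_reducible_add markov_reducible_scale)
qed

lemma markov_reducible_alternating:
  assumes "z \<noteq> z'" and IH: "\<And>x. markov_reducible (e2 * word (z' # w) * e2 * word x)"
  shows "markov_reducible (e2 * word (z # z' # w) * e2 * word x)"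
proof (cases x rule: rev_cases)
  case Nil
  have "word (z # z' # w) * e2 * e2 = alg (q + 1) * (word (z # z' # w) * e2 * 1)"
    by (simp only: mult.assoc e_square(2) mult_alg_left[of "word (z # z' # w)"] mult_1_right)
  then have "markov_reducible (word (z # z' # w) * e2 * e2)"
    by (simp only: markov_reducible_scale markov_reducible_B_e2_B word_in_B one_in_B)
  then have "markov_reducible (e2 * (word (z # z' # w) * e2))"
    by (rule markov_reducible_commute)
  with Nil show ?thesis
    by (simp add: mult.assoc)
next
  case (snoc xs l)
  have "markov_reducible (letter l * (e2 * word (z # z' # w) * e2 * word xs))"
  proof (cases "l = z")
    case True
    then have "letter l * (e2 * word (z # z' # w) * e2 * word xs)
        = alg q * ((letter z * word (z' # w)) * e2 * word xs)"
      using letter_e2_letter by (simp add: mult.assoc[symmetric])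
    then show ?thesis
      by (simp only: markov_reducible_scale markov_reducible_B_e2_B subalg2.mult letter_in_B
          word_in_B)
  next
    case False
    with assms(1) have "l = z'" by blast
    then show ?thesis
      using markov_reducible_alternating_rotated[OF assms] by simp
  qed
  then have "markov_reducible ((e2 * word (z # z' # w) * e2 * word xs) * letter l)"
    by (rule markov_reducible_commute)
  with snoc show ?thesis
    by (simp add: word_append mult.assoc)
qed

lemma markov_reducible_e2_word_e2_word: "markov_reducible (e2 * word y * e2 * word x)"
proof (induction "length y" arbitrary: y x rule: less_induct)
  case less
  consider "y = []" | z where "y = [z]" | z w where "y = z # z # w"
    | z z' w where "y = z # z' # w" "z \<noteq> z'"
    by (cases y rule: remdups_adj.cases) auto
  then show ?case
  proof cases
    case 1
    then have "e2 * word y * e2 * word x = alg (q + 1) * (1 * e2 * word x)"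
      by (simp add: e_square(2) mult.assoc)
    then show ?thesis
      using markov_reducible_scale[OF markov_reducible_B_e2_B[OF one_in_B word_in_B]] by metis
  next
    case (2 z)
    then have "e2 * word y * e2 * word x = alg q * (1 * e2 * word x)"
      using e2_letter_e2 by (simp add: mult.assoc[symmetric])
    then show ?thesis
      using markov_reducible_scale[OF markov_reducible_B_e2_B[OF one_in_B word_in_B]] by metis
  next
    case (3 z w)
    then have "e2 * word y * e2 * word x = alg (q + 1) * (e2 * word (z # w) * e2 * word x)"
      by (simp add: mult.assoc mult_context2[OF letter_square] mult_alg_left[of e2])
    then show ?thesis
      using less.hyps[of "z # w"] 3 by (simp add: markov_reducible_scale)
  next
    case (4 z z' w)
    then show ?thesis
      using markov_reducible_alternating less.hyps[of "z' # w"] by simp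
  qed
qed

inductive_set word_span :: "'a set" where
  scaled_word: "alg k * word w \<in> word_span"
| add: "a \<in> word_span \<Longrightarrow> b \<in> word_span \<Longrightarrow> a + b \<in> word_span"

lemma word_span_mult: "a \<in> word_span \<Longrightarrow> b \<in> word_span \<Longrightarrow> a * b \<in> word_span"
proof (induction a rule: word_span.induct)
  case (scaled_word k v)
  from scaled_word.prems show ?case
  proof (induction b rule: word_span.induct)
    case (scaled_word l w)
    have "alg k * word v * (alg l * word w) = alg (k * l) * word (v @ w)"
      by (simp add: word_append alg_mult mult.assoc mult_alg_left[of "word v"])
    then show ?case by (simp add: word_span.scaled_word)
  qed (simp add: ring_distribs word_span.add)
qed (simp add: ring_distribs word_span.add)

lemma B_subset_word_span: "b \<in> B \<Longrightarrow> b \<in> word_span"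
proof (induction b rule: subalg2.induct)
  case (scal k)
  then show ?case using word_span.scaled_word[of k "[]"] by simp
next
  case gen1
  have "g1 = alg 1 * word [True] + alg (- 1) * word []"
    by (simp add: letter_def e1_def alg_minus)
  then show ?case by (metis word_span.scaled_word word_span.add)
next
  case gen2
  have "u = alg 1 * word [False] + alg (- 1) * word []"
    by (simp add: letter_def Q_eq alg_minus)
  then show ?case by (metis word_span.scaled_word word_span.add)
qed (simp_all add: word_span.add word_span_mult)

lemma markov_reducible_e2_span_e2_span:
  "a \<in> word_span \<Longrightarrow> b \<in> word_span \<Longrightarrow> markov_reducible (e2 * a * e2 * b)"
proof (induction a rule: word_span.induct)
  case (scaled_word k v)
  from scaled_word.prems show ?case
  proof (induction b rule: word_span.induct)
    case (scaled_word l w)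
    have "e2 * (alg k * word v) * e2 * (alg l * word w) = alg (k * l) * (e2 * word v * e2 * word w)"
      by (simp add: alg_mult mult.assoc mult_alg_left[of e2] mult_alg_left[of "word v"])
    then show ?case by (simp add: markov_reducible_scale markov_reducible_e2_word_e2_word)
  qed (simp add: ring_distribs markov_reducible_add)
qed (simp add: ring_distribs markov_reducible_add)

lemma markov_reducible_B_g2_B_g2:
  assumes "a \<in> B" and "b \<in> B"
  shows "markov_reducible (a * g2 * b * g2)"
proof -
  have "a * g2 * b * g2 = a * (e2 * b * e2) - a * b * e2 * 1 - a * g2 * b"
    unfolding e2_def by (simp add: algebra_simps)
  moreover have "markov_reducible (a * (e2 * b * e2))"
  proof (rule markov_reducible_commute)
    show "markov_reducible (e2 * b * e2 * a)"
      using assms by (intro markov_reducible_e2_span_e2_span B_subset_word_span)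
  qed
  ultimately show ?thesis
    using assms by (simp only:) (intro markov_reducible_diff markov_reducible_B_e2_B
      markov_reducible_B_g2_B subalg2.mult one_in_B)
qed

end

theorem lemma4p7:
  fixes alg :: "'k::{idom,ring_char_0} \<Rightarrow> 'a::ring_1"
    and q :: 'k and g1 g2 g3 g2inv :: 'a and \<tau> :: "'a \<Rightarrow> 'k" and r s :: nat
  assumes alg: "is_K_algebra alg"
    and q_unit: "\<exists>qi. q * qi = 1" and q_square: "\<exists>t. q = t ^ 2" and q1_unit: "\<exists>w. (q + 1) * w = 1"
    and rels: "TL3_rels alg q g1 g2 g3"
    and inv: "g2 * g2inv = 1" "g2inv * g2 = 1"
    and tr: "is_trace alg \<tau>"
    and r_pos: "0 < r" and rs: "r \<le> s"
  shows "let u = g2 * g3 * g2inv; X = g2 * g1 * g3; B = subalg2 alg g1 u in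
    \<exists>h c Ms. h \<le> s \<and> (\<forall>j\<le>h. c j \<in> B) \<and> (\<forall>m\<in>set Ms. is_markov B g2 m) \<and>
      \<tau> ((g1 * u) ^ r * g1 * g2 * (g1 * u) ^ s * g1 * g2)
        = \<tau> ((\<Sum>j\<le>h. c j * X ^ j) + sum_list Ms)"
proof -
  obtain qi where "q * qi = 1"
    using q_unit by blast
  then interpret TL3_trace alg q qi g1 g2 g3 g2inv \<tau>
    using alg rels inv tr by unfold_locales
  have "(g1 * u) ^ n * g1 \<in> B" for n
    by (intro subalg2.mult power_in_B subalg2.gen1 subalg2.gen2)
  then have "markov_reducible ((g1 * u) ^ r * g1 * g2 * ((g1 * u) ^ s * g1) * g2)"
    by (intro markov_reducible_B_g2_B_g2)
  then obtain Ms where "\<forall>m\<in>set Ms. is_markov B g2 m"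
    and "\<tau> ((g1 * u) ^ r * g1 * g2 * (g1 * u) ^ s * g1 * g2) = \<tau> (sum_list Ms)"
    unfolding markov_reducible_def by (auto simp: mult.assoc)
  moreover have "0 \<in> B"
    using subalg2.scal[of alg 0 g1 u] by simp
  ultimately show ?thesis
    unfolding Let_def by (intro exI[of _ 0] exI[of _ "\<lambda>_. 0"] exI[of _ Ms]) simp
qed

end
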